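(* Let $\Gamma\curvearrowright X, I$ be a dynamical ideal with permutation model $W[[X]]$. (1) If the dynamical ideal is $\sigma$-complete, then $W[[X]]$ satisfies the axiom of countable choice. (2) If the dynamical ideal is definably closed and $W[[X]]$ satisfies the axiom of countable choice, then the dynamical ideal is $\sigma$-complete.
   Context: Work in ZFC. $V[[X]]$ is the well-founded model of ZFCA with set of atoms exactly $X$ in which every set of elements is represented by an element; a group action of $\Gamma$ on $X$ extends to $V[[X]]$ by $\gamma\cdot A=\{\gamma\cdot B:B\in A\}$. $\mathrm{stab}(A)=\{\gamma:\gamma\cdot A=A\}$, $\mathrm{pstab}(a)=\{\gamma:\gamma\cdot B=B\ \forall B\in a\}$. A dynamical ideal $\Gamma\curvearrowright X, I$: a group $\Gamma$ acting on $X$ and a $\Gamma$-invariant ideal $I$ on $X$ containing all singletons. Its permutation model $W[[X]]$ is the class of $A\in V[[X]]$ such that $A$ and every element of its transitive closure are symmetric, where $A$ is symmetric if $\mathrm{pstab}(b)\subseteq\mathrm{stab}(A)$ for some $b\in I$. The axiom of countable choice: every countable family of nonempty sets has a choice function. The dynamical ideal is $\sigma$-complete if for every $a\in I$ and every sequence $\langle b_n:n\in\omega\rangle$ of sets in $I$ there are $\gamma_n\in\mathrm{pstab}(a)$ with $\bigcup_n\gamma_n\cdot b_n\in I$. A set $a\subseteq X$ is definably closed if for every $x\in X\setminus a$ there is $\gamma\in\mathrm{pstab}(a)$ with $\gamma\cdot x\neq x$; the dynamical ideal is definably closed if every set in $I$ is a subset of a definably closed set in $I$. *)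

theory Defs
  imports "HOL-Algebra.Group_Action"
begin

definition pstab :: "('g, 'm) monoid_scheme \<Rightarrow> ('g \<Rightarrow> 'x \<Rightarrow> 'x) \<Rightarrow> 'x set \<Rightarrow> 'g set" where
  "pstab G \<phi> a = {\<gamma> \<in> carrier G. \<forall>x\<in>a. \<phi> \<gamma> x = x}"

definition dyn_ideal :: "('g, 'm) monoid_scheme \<Rightarrow> 'x set \<Rightarrow> ('g \<Rightarrow> 'x \<Rightarrow> 'x) \<Rightarrow> 'x set set \<Rightarrow> bool" where
  "dyn_ideal G X \<phi> I \<longleftrightarrow>
     group_action G X \<phi> \<and>
     I \<subseteq> Pow X \<and> {} \<in> I \<and>
     (\<forall>a\<in>I. \<forall>b. b \<subseteq> a \<longrightarrow> b \<in> I) \<and>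
     (\<forall>a\<in>I. \<forall>b\<in>I. a \<union> b \<in> I) \<and>
     (\<forall>x\<in>X. {x} \<in> I) \<and>
     (\<forall>\<gamma>\<in>carrier G. \<forall>a\<in>I. \<phi> \<gamma> ` a \<in> I)"

definition sigma_complete :: "('g, 'm) monoid_scheme \<Rightarrow> ('g \<Rightarrow> 'x \<Rightarrow> 'x) \<Rightarrow> 'x set set \<Rightarrow> bool" where
  "sigma_complete G \<phi> I \<longleftrightarrow>
     (\<forall>a\<in>I. \<forall>b :: nat \<Rightarrow> 'x set. (\<forall>n. b n \<in> I) \<longrightarrow>
        (\<exists>\<gamma> :: nat \<Rightarrow> 'g. (\<forall>n. \<gamma> n \<in> pstab G \<phi> a) \<and> (\<Union>n. \<phi> (\<gamma> n) ` b n) \<in> I))"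

definition definably_closed_set :: "('g, 'm) monoid_scheme \<Rightarrow> 'x set \<Rightarrow> ('g \<Rightarrow> 'x \<Rightarrow> 'x) \<Rightarrow> 'x set \<Rightarrow> bool" where
  "definably_closed_set G X \<phi> a \<longleftrightarrow>
     (\<forall>x\<in>X - a. \<exists>\<gamma>\<in>pstab G \<phi> a. \<phi> \<gamma> x \<noteq> x)"

definition definably_closed :: "('g, 'm) monoid_scheme \<Rightarrow> 'x set \<Rightarrow> ('g \<Rightarrow> 'x \<Rightarrow> 'x) \<Rightarrow> 'x set set \<Rightarrow> bool" where
  "definably_closed G X \<phi> I \<longleftrightarrow>
     (\<forall>a\<in>I. \<exists>c\<in>I. a \<subseteq> c \<and> definably_closed_set G X \<phi> c)"

text \<open>A set is coded by a well-founded tree; a node lists its elements, indexed by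
  (some of) the elements of the type 'i. Equality of coded objects is extensional
  equality veq.\<close>

datatype ('x, 'i) vtree = Atom 'x | Node "'i \<Rightarrow> ('x, 'i) vtree option"

definition children :: "('x, 'i) vtree \<Rightarrow> ('x, 'i) vtree set" where
  "children t = (case t of Atom x \<Rightarrow> {} | Node f \<Rightarrow> {s. Some s \<in> range f})"

inductive veq :: "('x, 'i) vtree \<Rightarrow> ('x, 'i) vtree \<Rightarrow> bool" where
  veq_atom: "veq (Atom x) (Atom x)"
| veq_node: "(\<forall>s. s \<in> children (Node f) \<longrightarrow> (\<exists>t. t \<in> children (Node g) \<and> veq s t)) \<Longrightarrow>
             (\<forall>t. t \<in> children (Node g) \<longrightarrow> (\<exists>s. s \<in> children (Node f) \<and> veq s t)) \<Longrightarrow>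
             veq (Node f) (Node g)"

definition vmem :: "('x, 'i) vtree \<Rightarrow> ('x, 'i) vtree \<Rightarrow> bool" where
  "vmem s t \<longleftrightarrow> (\<exists>u\<in>children t. veq s u)"

definition isSet :: "('x, 'i) vtree \<Rightarrow> bool" where
  "isSet t \<longleftrightarrow> (\<exists>f. t = Node f)"

inductive vsub :: "('x, 'i) vtree \<Rightarrow> ('x, 'i) vtree \<Rightarrow> bool" where
  "s \<in> children t \<Longrightarrow> vsub s t"
| "vsub s u \<Longrightarrow> u \<in> children t \<Longrightarrow> vsub s t"

definition atoms_in :: "'x set \<Rightarrow> ('x, 'i) vtree \<Rightarrow> bool" where
  "atoms_in X t \<longleftrightarrow> (\<forall>x. (t = Atom x \<or> vsub (Atom x) t) \<longrightarrow> x \<in> X)"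

primrec vact :: "('g \<Rightarrow> 'x \<Rightarrow> 'x) \<Rightarrow> 'g \<Rightarrow> ('x, 'i) vtree \<Rightarrow> ('x, 'i) vtree" where
  "vact \<phi> \<gamma> (Atom x) = Atom (\<phi> \<gamma> x)"
| "vact \<phi> \<gamma> (Node f) = Node (\<lambda>i. map_option (vact \<phi> \<gamma>) (f i))"

definition vstab :: "('g, 'm) monoid_scheme \<Rightarrow> ('g \<Rightarrow> 'x \<Rightarrow> 'x) \<Rightarrow> ('x, 'i) vtree \<Rightarrow> 'g set" where
  "vstab G \<phi> A = {\<gamma> \<in> carrier G. veq (vact \<phi> \<gamma> A) A}"

definition symmetric :: "('g, 'm) monoid_scheme \<Rightarrow> ('g \<Rightarrow> 'x \<Rightarrow> 'x) \<Rightarrow> 'x set set \<Rightarrow> ('x, 'i) vtree \<Rightarrow> bool" where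
  "symmetric G \<phi> I A \<longleftrightarrow> (\<exists>b\<in>I. pstab G \<phi> b \<subseteq> vstab G \<phi> A)"

text \<open>membership in the permutation model W[[X]] (intersected with the hereditarily
  at most |'i| sets)\<close>
definition inW :: "('g, 'm) monoid_scheme \<Rightarrow> 'x set \<Rightarrow> ('g \<Rightarrow> 'x \<Rightarrow> 'x) \<Rightarrow> 'x set set \<Rightarrow> ('x, 'i) vtree \<Rightarrow> bool" where
  "inW G X \<phi> I A \<longleftrightarrow> atoms_in X A \<and> symmetric G \<phi> I A \<and> (\<forall>s. vsub s A \<longrightarrow> symmetric G \<phi> I s)"

definition is_upair :: "('x, 'i) vtree \<Rightarrow> ('x, 'i) vtree \<Rightarrow> ('x, 'i) vtree \<Rightarrow> bool" where
  "is_upair u a b \<longleftrightarrow> isSet u \<and> (\<forall>s. vmem s u \<longleftrightarrow> veq s a \<or> veq s b)"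

definition is_kpair :: "('x, 'i) vtree \<Rightarrow> ('x, 'i) vtree \<Rightarrow> ('x, 'i) vtree \<Rightarrow> bool" where
  "is_kpair p a b \<longleftrightarrow> isSet p \<and> (\<forall>s. vmem s p \<longleftrightarrow> is_upair s a a \<or> is_upair s a b)"

primrec is_vnat :: "nat \<Rightarrow> ('x, 'i) vtree \<Rightarrow> bool" where
  "is_vnat 0 t \<longleftrightarrow> isSet t \<and> (\<forall>s. \<not> vmem s t)"
| "is_vnat (Suc n) t \<longleftrightarrow> isSet t \<and>
     (\<forall>s. vmem s t \<longleftrightarrow> (is_vnat n s \<or> (\<exists>u. is_vnat n u \<and> vmem s u)))"

definition is_omega :: "('x, 'i) vtree \<Rightarrow> bool" where
  "is_omega w \<longleftrightarrow> isSet w \<and> (\<forall>s. vmem s w \<longleftrightarrow> (\<exists>n. is_vnat n s))"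

definition is_fun :: "('x, 'i) vtree \<Rightarrow> ('x, 'i) vtree \<Rightarrow> bool" where
  "is_fun g D \<longleftrightarrow> isSet g \<and>
     (\<forall>p. vmem p g \<longrightarrow> (\<exists>a b. is_kpair p a b \<and> vmem a D)) \<and>
     (\<forall>a. vmem a D \<longrightarrow> (\<exists>p b. vmem p g \<and> is_kpair p a b)) \<and>
     (\<forall>p p' a b b'. vmem p g \<and> vmem p' g \<and> is_kpair p a b \<and> is_kpair p' a b' \<longrightarrow> veq b b')"

definition countable_in_W :: "('g, 'm) monoid_scheme \<Rightarrow> 'x set \<Rightarrow> ('g \<Rightarrow> 'x \<Rightarrow> 'x) \<Rightarrow> 'x set set \<Rightarrow> ('x, 'i) vtree \<Rightarrow> bool" where
  "countable_in_W G X \<phi> I F \<longleftrightarrow>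
     (\<exists>g w. inW G X \<phi> I g \<and> is_omega w \<and> is_fun g F \<and>
        (\<forall>p a n. vmem p g \<and> is_kpair p a n \<longrightarrow> vmem n w) \<and>
        (\<forall>p p' a a' n. vmem p g \<and> vmem p' g \<and> is_kpair p a n \<and> is_kpair p' a' n \<longrightarrow> veq a a'))"

text \<open>The axiom of countable choice holds in the permutation model
  (restricted to codes with branching type 'i)\<close>
definition countable_choice_W :: "'i itself \<Rightarrow> ('g, 'm) monoid_scheme \<Rightarrow> 'x set \<Rightarrow> ('g \<Rightarrow> 'x \<Rightarrow> 'x) \<Rightarrow> 'x set set \<Rightarrow> bool" where
  "countable_choice_W _ G X \<phi> I \<longleftrightarrow>
     (\<forall>F :: ('x, 'i) vtree.
        inW G X \<phi> I F \<and> isSet F \<and> countable_in_W G X \<phi> I F \<and>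
        (\<forall>A. vmem A F \<longrightarrow> isSet A \<and> (\<exists>y. vmem y A)) \<longrightarrow>
        (\<exists>c. inW G X \<phi> I c \<and> is_fun c F \<and>
             (\<forall>p A y. vmem p c \<and> is_kpair p A y \<longrightarrow> vmem y A)))"

end

theory Submission
  imports Defs
begin

text \<open>
  (1) Let \<open>F\<close> be a countable family of nonempty sets in the model, enumerated by some \<open>g\<close>
  supported by \<open>c \<in> I\<close>. A permutation fixing \<open>c\<close> pointwise fixes \<open>g\<close> and hence every member of
  \<open>F\<close>. Pick an element \<open>y\<^sub>n\<close> of the \<open>n\<close>-th member, supported by \<open>b\<^sub>n \<in> I\<close>. By
  \<open>\<sigma>\<close>-completeness there are \<open>\<gamma>\<^sub>n\<close> fixing \<open>c\<close> pointwise such that \<open>\<Union>\<^sub>n \<gamma>\<^sub>n b\<^sub>n \<in> I\<close>; then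
  \<open>\<gamma>\<^sub>n y\<^sub>n\<close> still lies in the \<open>n\<close>-th member, and \<open>n \<mapsto> \<gamma>\<^sub>n y\<^sub>n\<close> is supported by
  \<open>c \<union> \<Union>\<^sub>n \<gamma>\<^sub>n b\<^sub>n\<close>.

  (2) Given \<open>a\<close> and \<open>b\<^sub>n\<close> in \<open>I\<close>, tag every atom of \<open>b\<^sub>n\<close> by an atom-free code of its position in a
  well-order, and let \<open>A\<^sub>n\<close> be the set of translates of the tagged \<open>b\<^sub>n\<close> by the pointwise stabiliser
  of \<open>a\<close>. The family of the \<open>A\<^sub>n\<close> is countable in the model, so it has a choice function,
  picking translates by some \<open>\<gamma>\<^sub>n\<close>; let \<open>d \<in> I\<close> support it and put \<open>a \<union> d\<close> into a definably
  closed \<open>e \<in> I\<close>. A permutation fixing \<open>e\<close> pointwise fixes the choice function and every \<open>A\<^sub>n\<close>,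
  hence every chosen translate and, thanks to the tags, every point of \<open>\<gamma>\<^sub>n b\<^sub>n\<close>. By
  definable closedness \<open>\<gamma>\<^sub>n b\<^sub>n \<subseteq> e\<close>, so \<open>\<Union>\<^sub>n \<gamma>\<^sub>n b\<^sub>n \<in> I\<close>.
\<close>

lemma children_Atom [simp]: "children (Atom x) = {}"
  by (simp add: children_def)

lemma children_Node: "children (Node f) = {s. Some s \<in> range f}"
  by (simp add: children_def)

lemma children_NodeI: "f i = Some u \<Longrightarrow> u \<in> children (Node f)"
  by (simp add: children_Node) (metis rangeI)

lemma children_NodeE: "u \<in> children (Node f) \<Longrightarrow> \<exists>i. f i = Some u"
  by (auto simp: children_Node)

lemma children_Node_map_option:
  "children (Node (\<lambda>i. map_option h (f i))) = h ` children (Node f)"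
proof (rule Set.set_eqI)
  fix s
  have "s \<in> children (Node (\<lambda>i. map_option h (f i))) \<longleftrightarrow> (\<exists>i u. f i = Some u \<and> s = h u)"
    unfolding children_Node by (auto simp: image_iff) (metis map_option_eq_Some, metis option.map(2))
  also have "\<dots> \<longleftrightarrow> s \<in> h ` children (Node f)"
    unfolding children_Node by (simp add: image_iff) (metis rangeE rangeI)
  finally show "s \<in> children (Node (\<lambda>i. map_option h (f i))) \<longleftrightarrow> s \<in> h ` children (Node f)" .
qed

lemma vtree_induct_children [case_names Atom Node]:
  assumes "\<And>x. P (Atom x)"
    and "\<And>f. (\<And>u. u \<in> children (Node f) \<Longrightarrow> P u) \<Longrightarrow> P (Node f)"
  shows "P t"
proof (induction t)
  case (Atom x)
  show ?case by (rule assms(1))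
next
  case (Node f)
  show ?case by (rule assms(2)) (metis Node.IH children_NodeE option.set_intros rangeI)
qed

lemma veq_Atom_iff [simp]: "veq (Atom x) t \<longleftrightarrow> t = Atom x"
  by (auto elim: veq.cases intro: veq.intros)

lemma veq_Atom_iff' [simp]: "veq t (Atom x) \<longleftrightarrow> t = Atom x"
  by (auto elim: veq.cases intro: veq.intros)

lemma veq_NodeI:
  "(\<forall>s\<in>children (Node f). \<exists>u\<in>children (Node g). veq s u) \<Longrightarrow>
   (\<forall>u\<in>children (Node g). \<exists>s\<in>children (Node f). veq s u) \<Longrightarrow> veq (Node f) (Node g)"
  by (rule veq.intros) blast+

lemma veq_NodeE:
  assumes "veq (Node f) t"
  obtains g where "t = Node g" "\<forall>s\<in>children (Node f). \<exists>u\<in>children (Node g). veq s u"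
    "\<forall>u\<in>children (Node g). \<exists>s\<in>children (Node f). veq s u"
  using assms by (cases rule: veq.cases) blast+

lemma veq_setI:
  "isSet s \<Longrightarrow> isSet t \<Longrightarrow> (\<forall>u\<in>children s. \<exists>v\<in>children t. veq u v) \<Longrightarrow>
   (\<forall>v\<in>children t. \<exists>u\<in>children s. veq u v) \<Longrightarrow> veq s t"
  unfolding isSet_def using veq_NodeI by blast

lemma veq_refl [simp, intro]: "veq t t"
  by (induction t rule: vtree_induct_children) (auto intro: veq.intros veq_NodeI)

lemma veq_sym: "veq s t \<Longrightarrow> veq t s"
  by (induction rule: veq.induct) (auto intro!: veq_NodeI)

lemma veq_trans: "veq s t \<Longrightarrow> veq t u \<Longrightarrow> veq s u"
proof (induction s arbitrary: t u rule: vtree_induct_children)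
  case (Atom x)
  then show ?case by simp
next
  case (Node f)
  from Node.prems(1) obtain g where g: "t = Node g"
    "\<forall>s\<in>children (Node f). \<exists>u\<in>children (Node g). veq s u"
    "\<forall>u\<in>children (Node g). \<exists>s\<in>children (Node f). veq s u"
    by (rule veq_NodeE)
  from Node.prems(2) g(1) obtain h where h: "u = Node h"
    "\<forall>s\<in>children (Node g). \<exists>u\<in>children (Node h). veq s u"
    "\<forall>u\<in>children (Node h). \<exists>s\<in>children (Node g). veq s u"
    by (metis veq_NodeE)
  show ?case
    unfolding h(1) by (rule veq_NodeI) (use g(2,3) h(2,3) Node.IH in metis)+
qed

lemma veq_isSet: "veq s t \<Longrightarrow> isSet s \<Longrightarrow> isSet t"
  unfolding isSet_def by (metis veq_NodeE)

lemma vmem_child: "u \<in> children t \<Longrightarrow> vmem u t"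
  unfolding vmem_def by blast

lemma vmem_veq_left: "veq a a' \<Longrightarrow> vmem a t \<Longrightarrow> vmem a' t"
  unfolding vmem_def by (meson veq_sym veq_trans)

lemma vmem_veq_right: "veq t t' \<Longrightarrow> vmem a t \<Longrightarrow> vmem a t'"
  unfolding vmem_def by (cases t) (auto elim!: veq_NodeE, meson veq_trans)

lemma veq_extensional:
  assumes "isSet s" "isSet t" "\<And>x. vmem x s \<longleftrightarrow> vmem x t"
  shows "veq s t"
proof (rule veq_setI[OF assms(1,2)])
  show "\<forall>u\<in>children s. \<exists>v\<in>children t. veq u v"
    using assms(3) vmem_child unfolding vmem_def by blast
  show "\<forall>v\<in>children t. \<exists>u\<in>children s. veq u v"
    using assms(3) vmem_child unfolding vmem_def by (blast intro: veq_sym)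
qed

lemma veq_iff_vmem: "isSet t \<Longrightarrow> veq u t \<longleftrightarrow> isSet u \<and> (\<forall>s. vmem s u \<longleftrightarrow> vmem s t)"
  by (meson veq_isSet veq_extensional veq_sym vmem_veq_right)

lemma not_vmem_self: "\<not> vmem t t"
proof (induction t rule: vtree_induct_children)
  case (Atom x)
  then show ?case by (simp add: vmem_def)
next
  case (Node f)
  show ?case
  proof
    assume "vmem (Node f) (Node f)"
    then obtain u where u: "u \<in> children (Node f)" "veq (Node f) u" unfolding vmem_def by blast
    then have "vmem u u" using vmem_veq_right[OF u(2) vmem_child[OF u(1)]] by blast
    then show False using Node.IH[OF u(1)] by blast
  qed
qed

lemma vsub_iff: "vsub s t \<longleftrightarrow> (\<exists>u\<in>children t. s = u \<or> vsub s u)"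
  by (auto elim: vsub.cases intro: vsub.intros)

lemma vsub_Atom [simp]: "\<not> vsub s (Atom x)"
  by (subst vsub_iff) simp

lemma vsub_child: "u \<in> children t \<Longrightarrow> vsub u t"
  by (rule vsub.intros)

lemma vsub_trans:
  assumes "vsub s u" "vsub u t"
  shows "vsub s t"
  using assms(2,1) by (induction u t rule: vsub.induct) (meson vsub.intros)+

definition atoms :: "('x, 'i) vtree \<Rightarrow> 'x set" where
  "atoms t = {x. t = Atom x \<or> vsub (Atom x) t}"

lemma atoms_in_iff: "atoms_in X t \<longleftrightarrow> atoms t \<subseteq> X"
  unfolding atoms_in_def atoms_def by blast

lemma atoms_Atom [simp]: "atoms (Atom x) = {x}"
  by (auto simp: atoms_def)

lemma atoms_Node: "atoms (Node f) = \<Union> (atoms ` children (Node f))"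
proof (rule Set.set_eqI)
  fix x
  have "x \<in> atoms (Node f) \<longleftrightarrow> (\<exists>u\<in>children (Node f). Atom x = u \<or> vsub (Atom x) u)"
    unfolding atoms_def mem_Collect_eq using vsub_iff[of "Atom x" "Node f"] by blast
  then show "x \<in> atoms (Node f) \<longleftrightarrow> x \<in> \<Union> (atoms ` children (Node f))"
    by (auto simp: atoms_def)
qed

lemma atoms_set: "isSet t \<Longrightarrow> atoms t = \<Union> (atoms ` children t)"
  unfolding isSet_def by (metis atoms_Node)

lemma atoms_vsub: "vsub s t \<Longrightarrow> atoms s \<subseteq> atoms t"
  unfolding atoms_def using vsub_trans by blast

lemma atoms_child: "u \<in> children t \<Longrightarrow> atoms u \<subseteq> atoms t"
  using atoms_vsub vsub_child by blast

lemma isSet_vact [simp]: "isSet (vact \<phi> \<gamma> t) = isSet t"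
  unfolding isSet_def by (cases t) auto

lemma children_vact: "children (vact \<phi> \<gamma> t) = vact \<phi> \<gamma> ` children t"
  by (cases t) (simp_all add: children_Node_map_option)

lemma vact_cong:
  "(\<And>x. x \<in> atoms t \<Longrightarrow> \<phi> \<gamma> x = \<psi> \<delta> x) \<Longrightarrow> vact \<phi> \<gamma> t = vact \<psi> \<delta> t"
proof (induction t rule: vtree_induct_children)
  case (Atom x)
  then show ?case by simp
next
  case (Node f)
  have "map_option (vact \<phi> \<gamma>) (f i) = map_option (vact \<psi> \<delta>) (f i)" for i
  proof (cases "f i")
    case (Some u)
    then have u: "u \<in> children (Node f)" by (rule children_NodeI)
    then have "atoms u \<subseteq> atoms (Node f)" by (rule atoms_child)
    then have "vact \<phi> \<gamma> u = vact \<psi> \<delta> u" using Node.prems by (intro Node.IH[OF u]) blast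
    then show ?thesis using Some by simp
  qed simp
  then show ?case by simp
qed

lemma vact_fixed: "(\<And>x. x \<in> atoms t \<Longrightarrow> \<phi> \<gamma> x = x) \<Longrightarrow> vact \<phi> \<gamma> t = t"
proof (induction t rule: vtree_induct_children)
  case (Atom x)
  then show ?case by simp
next
  case (Node f)
  have "map_option (vact \<phi> \<gamma>) (f i) = f i" for i
  proof (cases "f i")
    case (Some u)
    then have u: "u \<in> children (Node f)" by (rule children_NodeI)
    then have "atoms u \<subseteq> atoms (Node f)" by (rule atoms_child)
    then have "vact \<phi> \<gamma> u = u" using Node.prems by (intro Node.IH[OF u]) blast
    then show ?thesis using Some by simp
  qed simp
  then show ?case by simp
qed

lemma atoms_vact: "atoms (vact \<phi> \<gamma> t) = \<phi> \<gamma> ` atoms t"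
proof (induction t rule: vtree_induct_children)
  case (Atom x)
  then show ?case by simp
next
  case (Node f)
  have "isSet (vact \<phi> \<gamma> (Node f))" by (simp add: isSet_def)
  then have "atoms (vact \<phi> \<gamma> (Node f)) = \<Union> (atoms ` vact \<phi> \<gamma> ` children (Node f))"
    by (simp only: atoms_set children_vact)
  also have "\<dots> = \<phi> \<gamma> ` atoms (Node f)"
    using Node.IH by (auto simp: atoms_Node)
  finally show ?case .
qed

lemma vact_vact:
  "(\<And>x. x \<in> atoms t \<Longrightarrow> \<phi> \<gamma> (\<phi> \<delta> x) = \<phi> \<epsilon> x) \<Longrightarrow> vact \<phi> \<gamma> (vact \<phi> \<delta> t) = vact \<phi> \<epsilon> t"
proof (induction t rule: vtree_induct_children)
  case (Atom x)
  then show ?case by simp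
next
  case (Node f)
  have "map_option (vact \<phi> \<gamma>) (map_option (vact \<phi> \<delta>) (f i)) = map_option (vact \<phi> \<epsilon>) (f i)" for i
  proof (cases "f i")
    case (Some u)
    then have u: "u \<in> children (Node f)" by (rule children_NodeI)
    then have "atoms u \<subseteq> atoms (Node f)" by (rule atoms_child)
    then have "vact \<phi> \<gamma> (vact \<phi> \<delta> u) = vact \<phi> \<epsilon> u" using Node.prems by (intro Node.IH[OF u]) blast
    then show ?thesis using Some by simp
  qed simp
  then show ?case by (simp add: option.map_comp comp_def)
qed

lemma veq_vact: "veq s t \<Longrightarrow> veq (vact \<phi> \<gamma> s) (vact \<phi> \<gamma> t)"
proof (induction rule: veq.induct)
  case (veq_atom x)
  then show ?case by simp
next
  case (veq_node f g)
  show ?case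
    by (rule veq_setI) (use veq_node in \<open>auto simp: children_vact simp del: vact.simps\<close>, simp_all add: isSet_def)
qed

lemma vmem_vact: "vmem a t \<Longrightarrow> vmem (vact \<phi> \<gamma> a) (vact \<phi> \<gamma> t)"
  unfolding vmem_def children_vact by (blast intro: veq_vact)

lemma veq_vact_setI:
  "isSet t \<Longrightarrow> (\<And>u. u \<in> children t \<Longrightarrow> veq (vact \<phi> \<delta> u) u) \<Longrightarrow> veq (vact \<phi> \<delta> t) t"
  by (rule veq_setI) (auto simp: children_vact)

lemma vsub_vact: "vsub s (vact \<phi> \<gamma> t) \<Longrightarrow> \<exists>s0. vsub s0 t \<and> s = vact \<phi> \<gamma> s0"
proof (induction t arbitrary: s rule: vtree_induct_children)
  case (Atom x)
  then show ?case by simp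
next
  case (Node f)
  from Node.prems obtain u where u: "u \<in> children (Node f)"
    "s = vact \<phi> \<gamma> u \<or> vsub s (vact \<phi> \<gamma> u)"
    using vsub_iff[of s "vact \<phi> \<gamma> (Node f)"] children_vact[of \<phi> \<gamma> "Node f"] by auto
  then show ?case using Node.IH[OF u(1)] vsub_child[OF u(1)] vsub_trans by blast
qed

definition vupair :: "('x, 'i) vtree \<Rightarrow> ('x, 'i) vtree \<Rightarrow> ('x, 'i) vtree" where
  "vupair a b = Node (\<lambda>i. Some (if i = undefined then a else b))"

definition vpair :: "('x, 'i) vtree \<Rightarrow> ('x, 'i) vtree \<Rightarrow> ('x, 'i) vtree" where
  "vpair a b = vupair (vupair a a) (vupair a b)"

lemma isSet_vupair [simp]: "isSet (vupair a b)"
  by (simp add: vupair_def isSet_def)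

lemma vact_vupair: "vact \<phi> \<gamma> (vupair a b) = vupair (vact \<phi> \<gamma> a) (vact \<phi> \<gamma> b)"
  by (simp add: vupair_def fun_eq_iff)

lemma vact_vpair: "vact \<phi> \<gamma> (vpair a b) = vpair (vact \<phi> \<gamma> a) (vact \<phi> \<gamma> b)"
  by (simp add: vpair_def vact_vupair)

context
  assumes infinite_index: "infinite (UNIV :: 'i set)"
begin

lemma children_vupair: "children (vupair a b :: ('x, 'i) vtree) = {a, b}"
proof -
  obtain j :: 'i where "j \<noteq> undefined"
    using infinite_index by (metis finite.emptyI finite_insert UNIV_eq_I insertI1 insert_iff)
  then show ?thesis
    unfolding vupair_def children_Node by (auto simp: image_iff)
qed

lemma children_vpair: "children (vpair a b :: ('x, 'i) vtree) = {vupair a a, vupair a b}"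
  unfolding vpair_def children_vupair ..

lemma vmem_vupair: "vmem s (vupair a b :: ('x, 'i) vtree) \<longleftrightarrow> veq s a \<or> veq s b"
  unfolding vmem_def children_vupair by blast

lemma is_upair_iff: "is_upair u a b \<longleftrightarrow> veq u (vupair a b :: ('x, 'i) vtree)"
  unfolding is_upair_def veq_iff_vmem[OF isSet_vupair] vmem_vupair by blast

lemma is_kpair_iff: "is_kpair p a b \<longleftrightarrow> veq p (vpair a b :: ('x, 'i) vtree)"
  unfolding is_kpair_def is_upair_iff vpair_def veq_iff_vmem[OF isSet_vupair] vmem_vupair ..

lemma is_kpair_vpair: "is_kpair (vpair a b) a (b :: ('x, 'i) vtree)"
  using is_kpair_iff by blast

lemma vupair_cong: "veq a a' \<Longrightarrow> veq b b' \<Longrightarrow> veq (vupair a b) (vupair a' b' :: ('x, 'i) vtree)"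
  by (simp add: veq_iff_vmem vmem_vupair) (meson veq_sym veq_trans)

lemma vpair_cong: "veq a a' \<Longrightarrow> veq b b' \<Longrightarrow> veq (vpair a b) (vpair a' b' :: ('x, 'i) vtree)"
  unfolding vpair_def by (simp add: vupair_cong)

lemma veq_vupairD:
  assumes "veq (vupair a b) (vupair c d :: ('x, 'i) vtree)"
  shows "(veq a c \<and> veq b d) \<or> (veq a d \<and> veq b c)"
proof -
  have "veq s a \<or> veq s b \<longleftrightarrow> veq s c \<or> veq s d" for s
    using assms vmem_vupair by (metis veq_iff_vmem isSet_vupair)
  then show ?thesis by (meson veq_refl veq_sym)
qed

lemma veq_vpairD:
  assumes "veq (vpair a b) (vpair c d :: ('x, 'i) vtree)"
  shows "veq a c \<and> veq b d"
proof -
  have "(veq (vupair a a) (vupair c c) \<and> veq (vupair a b) (vupair c d)) \<or>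
      (veq (vupair a a) (vupair c d) \<and> veq (vupair a b) (vupair c c))"
    using veq_vupairD assms unfolding vpair_def by blast
  then show ?thesis
  proof (elim disjE conjE)
    assume "veq (vupair a a) (vupair c c)" "veq (vupair a b) (vupair c d)"
    then have "veq a c" "(veq a c \<and> veq b d) \<or> (veq a d \<and> veq b c)"
      using veq_vupairD by blast+
    then show ?thesis using veq_sym veq_trans by blast
  next
    assume "veq (vupair a a) (vupair c d)" "veq (vupair a b) (vupair c c)"
    then have "veq a c" "veq a d" "veq b c"
      using veq_vupairD by blast+
    then show ?thesis using veq_sym veq_trans by blast
  qed
qed

lemma is_kpair_cong:
  "is_kpair p a b \<Longrightarrow> veq p p' \<Longrightarrow> veq a a' \<Longrightarrow> veq b b' \<Longrightarrow> is_kpair p' a' (b' :: ('x, 'i) vtree)"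
  unfolding is_kpair_iff by (meson vpair_cong veq_sym veq_trans)

lemma is_kpair_unique:
  "is_kpair p a b \<Longrightarrow> is_kpair p a' (b' :: ('x, 'i) vtree) \<Longrightarrow> veq a a' \<and> veq b b'"
  unfolding is_kpair_iff by (meson veq_vpairD veq_sym veq_trans)

lemma is_kpair_vact:
  "is_kpair p a (b :: ('x, 'i) vtree) \<Longrightarrow> is_kpair (vact \<phi> \<gamma> p) (vact \<phi> \<gamma> a) (vact \<phi> \<gamma> b)"
  unfolding is_kpair_iff by (metis veq_vact vact_vpair)

lemma vsub_vpair:
  assumes "vsub s (vpair a b :: ('x, 'i) vtree)"
  shows "s \<in> {vupair a a, vupair a b, a, b} \<or> vsub s a \<or> vsub s b"
  using assms unfolding vsub_iff[of s "vpair a b"] children_vpair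
  by (auto simp: vsub_iff[of s "vupair _ _"] children_vupair)

lemma atoms_vpair: "atoms (vpair a b :: ('x, 'i) vtree) = atoms a \<union> atoms b"
  by (auto simp: atoms_set vpair_def children_vupair)

lemma kpair_in_graphE:
  assumes "children g = (\<lambda>k. vpair (x k) (y k)) ` K" "vmem p (g :: ('x, 'i) vtree)" "is_kpair p a b"
  obtains k where "k \<in> K" "veq a (x k)" "veq b (y k)"
proof -
  obtain u where "u \<in> children g" "veq p u" using assms(2) unfolding vmem_def by blast
  with assms(1) obtain k where "k \<in> K" "veq p (vpair (x k) (y k))" by (auto elim!: imageE)
  then show thesis
    using that assms(3) is_kpair_unique is_kpair_iff veq_sym
    by metis
qed

lemma is_fun_graph:
  assumes "isSet g" "children g = (\<lambda>k. vpair (x k) (y k)) ` K" "children D = x ` K"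
    and "\<And>k k'. k \<in> K \<Longrightarrow> k' \<in> K \<Longrightarrow> veq (x k) (x k') \<Longrightarrow> veq (y k) (y k')"
  shows "is_fun g (D :: ('x, 'i) vtree)"
  unfolding is_fun_def
proof (intro conjI allI impI)
  show "isSet g" by fact
next
  fix p assume "vmem p g"
  then obtain u where "u \<in> children g" "veq p u" unfolding vmem_def by blast
  with assms(2) obtain k where "k \<in> K" "veq p (vpair (x k) (y k))" by (auto elim!: imageE)
  moreover have "vmem (x k) D" if "k \<in> K"
    using that assms(3) vmem_child by blast
  ultimately show "\<exists>a b. is_kpair p a b \<and> vmem a D"
    using is_kpair_iff by blast
next
  fix a assume "vmem a D"
  then obtain u where "u \<in> children D" "veq a u" unfolding vmem_def by blast
  with assms(3) obtain k where "k \<in> K" "veq a (x k)" by (auto elim!: imageE)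
  moreover have "vmem (vpair (x k) (y k)) g" if "k \<in> K"
    using that assms(2) vmem_child by blast
  ultimately show "\<exists>p b. vmem p g \<and> is_kpair p a b"
    using is_kpair_cong[OF is_kpair_vpair veq_refl veq_sym veq_refl]
    by blast
next
  fix p p' a b b' assume "vmem p g \<and> vmem p' g \<and> is_kpair p a b \<and> is_kpair p' a b'"
  then obtain k k' where "k \<in> K" "veq a (x k)" "veq b (y k)" "k' \<in> K" "veq a (x k')" "veq b' (y k')"
    using kpair_in_graphE[OF assms(2)] by metis
  then show "veq b b'" using assms(4) veq_sym veq_trans by metis
qed

end

definition vfamily :: "('a \<Rightarrow> 'i) \<Rightarrow> 'a set \<Rightarrow> ('a \<Rightarrow> ('x, 'i) vtree) \<Rightarrow> ('x, 'i) vtree" where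
  "vfamily \<iota> S t = Node (\<lambda>i. if i \<in> \<iota> ` S then Some (t (inv_into S \<iota> i)) else None)"

lemma isSet_vfamily [simp]: "isSet (vfamily \<iota> S t)"
  by (simp add: vfamily_def isSet_def)

lemma children_vfamily: "inj_on \<iota> S \<Longrightarrow> children (vfamily \<iota> S t) = t ` S"
  unfolding vfamily_def children_Node by (auto simp: image_iff split: if_splits)

lemma vact_vfamily: "vact \<phi> \<gamma> (vfamily \<iota> S t) = vfamily \<iota> S (\<lambda>x. vact \<phi> \<gamma> (t x))"
  by (simp add: vfamily_def fun_eq_iff)

lemma vfamily_cong: "(\<And>x. x \<in> S \<Longrightarrow> t x = t' x) \<Longrightarrow> vfamily \<iota> S t = vfamily \<iota> S t'"
  unfolding vfamily_def by (metis (no_types, lifting) image_iff inv_into_into)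

definition vcollapse :: "('a \<times> 'a) set \<Rightarrow> ('a \<Rightarrow> 'i) \<Rightarrow> 'a \<Rightarrow> ('x, 'i) vtree" where
  "vcollapse R \<iota> = wfrec R (\<lambda>rec x. vfamily \<iota> {y. (y, x) \<in> R} rec)"

lemma vcollapse_eq: "wf R \<Longrightarrow> vcollapse R \<iota> x = vfamily \<iota> {y. (y, x) \<in> R} (vcollapse R \<iota>)"
  unfolding vcollapse_def by (subst wfrec) (auto intro!: vfamily_cong simp: cut_apply)

lemma isSet_vcollapse: "wf R \<Longrightarrow> isSet (vcollapse R \<iota> x)"
  by (subst vcollapse_eq) auto

lemma children_vcollapse:
  "wf R \<Longrightarrow> inj \<iota> \<Longrightarrow> children (vcollapse R \<iota> x) = vcollapse R \<iota> ` {y. (y, x) \<in> R}"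
proof -
  assume "wf R" "inj \<iota>"
  then have "inj_on \<iota> {y. (y, x) \<in> R}" using inj_on_subset by blast
  then show ?thesis by (subst vcollapse_eq[OF \<open>wf R\<close>]) (rule children_vfamily)
qed

lemma atoms_vcollapse:
  assumes "wf R" "inj \<iota>"
  shows "atoms (vcollapse R \<iota> x :: ('x, 'i) vtree) = {}"
  using assms(1)
proof (induction x rule: wf_induct_rule)
  case (less x)
  have "atoms (vcollapse R \<iota> x :: ('x, 'i) vtree) = \<Union> (atoms ` children (vcollapse R \<iota> x :: ('x, 'i) vtree))"
    by (rule atoms_set[OF isSet_vcollapse[OF assms(1)]])
  then show ?case using less by (simp add: children_vcollapse[OF assms])
qed

lemma vact_vcollapse: "wf R \<Longrightarrow> inj \<iota> \<Longrightarrow> vact \<phi> \<gamma> (vcollapse R \<iota> x) = vcollapse R \<iota> x"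
  by (rule vact_fixed) (simp add: atoms_vcollapse)

lemma vcollapse_not_veq:
  assumes "wf R" "inj \<iota>" "(y, x) \<in> R"
  shows "\<not> veq (vcollapse R \<iota> x) (vcollapse R \<iota> y :: ('x, 'i) vtree)"
proof
  assume "veq (vcollapse R \<iota> x) (vcollapse R \<iota> y :: ('x, 'i) vtree)"
  moreover have "vmem (vcollapse R \<iota> y :: ('x, 'i) vtree) (vcollapse R \<iota> x)"
    using assms by (intro vmem_child) (simp add: children_vcollapse)
  ultimately show False using vmem_veq_right not_vmem_self by blast
qed

lemma vcollapse_veq_imp_eq:
  assumes "wf R" "inj \<iota>" "\<And>x y. x \<noteq> y \<Longrightarrow> (x, y) \<in> R \<or> (y, x) \<in> R"
    and "veq (vcollapse R \<iota> x) (vcollapse R \<iota> y :: ('x, 'i) vtree)"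
  shows "x = y"
  using assms vcollapse_not_veq[OF assms(1,2)] veq_sym by metis

definition vnum :: "(nat \<Rightarrow> 'i) \<Rightarrow> nat \<Rightarrow> ('x, 'i) vtree" where
  "vnum \<nu> = vcollapse {(j, k). j < k} \<nu>"

lemma isSet_vnum [simp]: "isSet (vnum \<nu> k)"
  unfolding vnum_def by (rule isSet_vcollapse[OF wf_less])

context
  fixes \<nu> :: "nat \<Rightarrow> 'i"
  assumes inj_nu: "inj \<nu>"
begin

lemma children_vnum: "children (vnum \<nu> k) = vnum \<nu> ` {..<k}"
  unfolding vnum_def by (subst children_vcollapse[OF wf_less inj_nu]) auto

lemma atoms_vnum: "atoms (vnum \<nu> k) = {}"
  unfolding vnum_def by (rule atoms_vcollapse[OF wf_less inj_nu])

lemma vact_vnum: "vact \<phi> \<gamma> (vnum \<nu> k) = vnum \<nu> k"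
  unfolding vnum_def by (rule vact_vcollapse[OF wf_less inj_nu])

lemma veq_vnum_imp_eq: "veq (vnum \<nu> j) (vnum \<nu> k :: ('x, 'i) vtree) \<Longrightarrow> j = k"
  unfolding vnum_def by (rule vcollapse_veq_imp_eq[OF wf_less inj_nu]) auto

lemma vmem_vnum: "vmem s (vnum \<nu> k) \<longleftrightarrow> (\<exists>j<k. veq s (vnum \<nu> j))"
  unfolding vmem_def children_vnum by blast

lemma is_vnat_iff: "is_vnat k t \<longleftrightarrow> veq t (vnum \<nu> k)"
proof (induction k arbitrary: t)
  case 0
  have "\<forall>s. \<not> vmem s (vnum \<nu> 0)" using vmem_vnum by blast
  then show ?case unfolding is_vnat.simps veq_iff_vmem[OF isSet_vnum[of \<nu> 0], of t] by blast
next
  case (Suc k)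
  have a: "(\<exists>u. veq u (vnum \<nu> k) \<and> vmem s u) \<longleftrightarrow> vmem s (vnum \<nu> k)" for s :: "('x, 'i) vtree"
    by (meson veq_refl veq_sym vmem_veq_right)
  have b: "vmem s (vnum \<nu> (Suc k)) \<longleftrightarrow> veq s (vnum \<nu> k) \<or> vmem s (vnum \<nu> k)"
    for s :: "('x, 'i) vtree"
    unfolding vmem_vnum using less_Suc_eq by auto
  show ?case
    unfolding is_vnat.simps Suc.IH a veq_iff_vmem[OF isSet_vnum[of \<nu> "Suc k"], of t] b ..
qed

definition vomega :: "('x, 'i) vtree" where
  "vomega = vfamily \<nu> UNIV (vnum \<nu>)"

lemma vmem_vomega: "vmem s vomega \<longleftrightarrow> (\<exists>k. veq s (vnum \<nu> k))"
  unfolding vomega_def vmem_def children_vfamily[OF inj_nu] by blast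

lemma is_omega_vomega: "is_omega vomega"
  unfolding is_omega_def vmem_vomega is_vnat_iff by (simp add: vomega_def)

lemma veq_vact_if_is_vnat: "is_vnat k (t :: ('x, 'i) vtree) \<Longrightarrow> veq (vact \<phi> \<gamma> t) t"
proof -
  assume "is_vnat k t"
  then have "veq t (vnum \<nu> k)" by (simp add: is_vnat_iff)
  moreover have "veq (vact \<phi> \<gamma> t) (vnum \<nu> k)"
    using veq_vact[OF calculation, of \<phi> \<gamma>] by (simp add: vact_vnum)
  ultimately show ?thesis using veq_sym veq_trans by blast
qed

end

sublocale group_action \<subseteq> group G
  using group_hom group_hom.axioms(1) by blast

lemma pstab_carrier: "\<gamma> \<in> pstab G \<phi> a \<Longrightarrow> \<gamma> \<in> carrier G"
  by (simp add: pstab_def)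

lemma pstab_antimono: "a \<subseteq> b \<Longrightarrow> pstab G \<phi> b \<subseteq> pstab G \<phi> a"
  by (auto simp: pstab_def)

context group_action
begin

lemma subgroup_pstab: "a \<subseteq> E \<Longrightarrow> subgroup (pstab G \<phi> a) G"
proof (rule subgroupI)
  assume "a \<subseteq> E"
  then have "pstab G \<phi> a = carrier G \<inter> (\<Inter>x\<in>a. stabilizer G \<phi> x)"
    by (auto simp: pstab_def stabilizer_def)
  moreover have "\<one> \<in> carrier G" "\<And>x. x \<in> a \<Longrightarrow> \<one> \<in> stabilizer G \<phi> x"
    using \<open>a \<subseteq> E\<close> stabilizer_one_closed by auto
  ultimately show "pstab G \<phi> a \<noteq> {}" by blast
  fix \<gamma> \<delta> assume "\<gamma> \<in> pstab G \<phi> a" "\<delta> \<in> pstab G \<phi> a"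
  with \<open>a \<subseteq> E\<close> show "inv \<gamma> \<in> pstab G \<phi> a" "\<gamma> \<otimes> \<delta> \<in> pstab G \<phi> a"
    unfolding \<open>pstab G \<phi> a = _\<close>
    by (auto intro: stabilizer_m_inv_closed stabilizer_m_closed)
qed (auto simp: pstab_def)

lemma lmult_pstab_image:
  assumes "a \<subseteq> E" "\<delta> \<in> pstab G \<phi> a"
  shows "(\<lambda>\<gamma>. \<delta> \<otimes> \<gamma>) ` pstab G \<phi> a = pstab G \<phi> a"
proof -
  interpret H: subgroup "pstab G \<phi> a" G
    using subgroup_pstab[OF assms(1)] .
  have "\<gamma> = \<delta> \<otimes> (inv \<delta> \<otimes> \<gamma>)" if "\<gamma> \<in> pstab G \<phi> a" for \<gamma>
    using that assms(2) by (simp add: m_assoc[symmetric])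
  then show ?thesis using assms(2) by (auto intro!: image_eqI)
qed

lemma vact_mult:
  "atoms t \<subseteq> E \<Longrightarrow> \<gamma> \<in> carrier G \<Longrightarrow> \<delta> \<in> carrier G \<Longrightarrow>
   vact \<phi> \<delta> (vact \<phi> \<gamma> t) = vact \<phi> (\<delta> \<otimes> \<gamma>) t"
  by (rule vact_vact) (auto simp: composition_rule)

lemma image_subset_E: "\<gamma> \<in> carrier G \<Longrightarrow> a \<subseteq> E \<Longrightarrow> \<phi> \<gamma> ` a \<subseteq> E"
  using element_image by blast

text \<open>A permutation fixing \<open>\<gamma> \<cdot> a\<close> pointwise is \<open>\<gamma> \<delta>' \<gamma>\<inverse>\<close> with \<open>\<delta>'\<close> fixing \<open>a\<close> pointwise.\<close>

lemma pstab_image_fixes_vact: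
  assumes \<gamma>: "\<gamma> \<in> carrier G" and "atoms t \<subseteq> E" "a \<subseteq> E"
    and fixes_t: "\<forall>\<delta>\<in>pstab G \<phi> a. veq (vact \<phi> \<delta> t) t"
    and \<delta>: "\<delta> \<in> pstab G \<phi> (\<phi> \<gamma> ` a)"
  shows "veq (vact \<phi> \<delta> (vact \<phi> \<gamma> t)) (vact \<phi> \<gamma> t)"
proof -
  have \<delta>_carrier: "\<delta> \<in> carrier G" using \<delta> by (rule pstab_carrier)
  define \<delta>' where "\<delta>' = inv \<gamma> \<otimes> (\<delta> \<otimes> \<gamma>)"
  have "\<delta>' \<in> pstab G \<phi> a"
  proof -
    have "\<phi> \<delta>' x = x" if "x \<in> a" for x
    proof -
      have x: "x \<in> E" using that \<open>a \<subseteq> E\<close> by blast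
      have "\<phi> \<gamma> x \<in> E" by (rule element_image[OF \<gamma> x refl])
      then have "\<phi> \<delta>' x = \<phi> (inv \<gamma>) (\<phi> \<delta> (\<phi> \<gamma> x))"
        unfolding \<delta>'_def using x \<gamma> \<delta>_carrier by (simp add: composition_rule)
      also have "\<phi> \<delta> (\<phi> \<gamma> x) = \<phi> \<gamma> x" using \<delta> that by (simp add: pstab_def)
      also have "\<phi> (inv \<gamma>) (\<phi> \<gamma> x) = x"
        using x \<gamma> by (metis composition_rule id_eq_one inv_closed l_inv restrict_apply')
      finally show ?thesis .
    qed
    then show ?thesis unfolding pstab_def \<delta>'_def using \<gamma> \<delta>_carrier by simp
  qed
  then have "veq (vact \<phi> \<gamma> (vact \<phi> \<delta>' t)) (vact \<phi> \<gamma> t)"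
    using fixes_t by (simp add: veq_vact)
  moreover have "\<gamma> \<otimes> \<delta>' = \<delta> \<otimes> \<gamma>"
    unfolding \<delta>'_def using \<gamma> \<delta>_carrier by (simp add: m_assoc[symmetric])
  ultimately show ?thesis
    using \<gamma> \<delta>_carrier \<open>atoms t \<subseteq> E\<close> by (simp add: vact_mult \<delta>'_def)
qed

end

definition hsymmetric :: "('g, 'm) monoid_scheme \<Rightarrow> ('g \<Rightarrow> 'x \<Rightarrow> 'x) \<Rightarrow> 'x set set \<Rightarrow> ('x, 'i) vtree \<Rightarrow> bool" where
  "hsymmetric G \<phi> I t \<longleftrightarrow> symmetric G \<phi> I t \<and> (\<forall>s. vsub s t \<longrightarrow> symmetric G \<phi> I s)"

lemma inW_iff: "inW G X \<phi> I t \<longleftrightarrow> atoms t \<subseteq> X \<and> hsymmetric G \<phi> I t"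
  unfolding inW_def hsymmetric_def atoms_in_iff ..

lemma symmetric_iff: "symmetric G \<phi> I t \<longleftrightarrow> (\<exists>b\<in>I. \<forall>\<delta>\<in>pstab G \<phi> b. veq (vact \<phi> \<delta> t) t)"
  unfolding symmetric_def vstab_def pstab_def by blast

lemma symmetricI:
  "b \<in> I \<Longrightarrow> (\<And>\<delta>. \<delta> \<in> pstab G \<phi> b \<Longrightarrow> veq (vact \<phi> \<delta> t) t) \<Longrightarrow> symmetric G \<phi> I t"
  unfolding symmetric_iff by blast

lemma symmetric_if_atoms_subset:
  assumes "b \<in> I" "atoms t \<subseteq> b"
  shows "symmetric G \<phi> I t"
proof (rule symmetricI[OF assms(1)])
  fix \<delta> assume "\<delta> \<in> pstab G \<phi> b"
  then have "vact \<phi> \<delta> t = t" using assms(2) by (intro vact_fixed) (auto simp: pstab_def)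
  then show "veq (vact \<phi> \<delta> t) t" by simp
qed

lemma hsymmetric_if_atoms_subset:
  assumes "b \<in> I" "atoms t \<subseteq> b"
  shows "hsymmetric G \<phi> I t"
  unfolding hsymmetric_def
proof (intro conjI allI impI)
  show "symmetric G \<phi> I t" using assms by (rule symmetric_if_atoms_subset)
  fix s assume "vsub s t"
  then have "atoms s \<subseteq> b" using assms(2) atoms_vsub by blast
  with assms(1) show "symmetric G \<phi> I s" by (rule symmetric_if_atoms_subset)
qed

lemma hsymmetric_vsub: "hsymmetric G \<phi> I t \<Longrightarrow> vsub s t \<Longrightarrow> hsymmetric G \<phi> I s"
  unfolding hsymmetric_def using vsub_trans by blast

lemma hsymmetric_child: "hsymmetric G \<phi> I t \<Longrightarrow> u \<in> children t \<Longrightarrow> hsymmetric G \<phi> I u"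
  using hsymmetric_vsub vsub_child by blast

lemma hsymmetricI:
  "symmetric G \<phi> I t \<Longrightarrow> (\<And>u. u \<in> children t \<Longrightarrow> hsymmetric G \<phi> I u) \<Longrightarrow> hsymmetric G \<phi> I t"
  unfolding hsymmetric_def by (subst vsub_iff) blast

locale dynamical_ideal =
  fixes G :: "('g, 'm) monoid_scheme" (structure) and X :: "'x set" and \<phi> :: "'g \<Rightarrow> 'x \<Rightarrow> 'x"
    and I :: "'x set set"
  assumes dyn_ideal: "dyn_ideal G X \<phi> I"
begin

sublocale group_action G X \<phi>
  using dyn_ideal unfolding dyn_ideal_def by blast

lemma ideal_subset: "a \<in> I \<Longrightarrow> a \<subseteq> X"
  using dyn_ideal unfolding dyn_ideal_def by blast

lemma empty_in_ideal: "{} \<in> I"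
  using dyn_ideal unfolding dyn_ideal_def by blast

lemma ideal_downward_closed: "a \<in> I \<Longrightarrow> b \<subseteq> a \<Longrightarrow> b \<in> I"
  using dyn_ideal unfolding dyn_ideal_def by blast

lemma ideal_Un: "a \<in> I \<Longrightarrow> b \<in> I \<Longrightarrow> a \<union> b \<in> I"
  using dyn_ideal unfolding dyn_ideal_def by blast

lemma ideal_image: "\<gamma> \<in> carrier G \<Longrightarrow> a \<in> I \<Longrightarrow> \<phi> \<gamma> ` a \<in> I"
  using dyn_ideal unfolding dyn_ideal_def by blast

lemma symmetric_vupair:
  assumes "infinite (UNIV :: 'i set)" "symmetric G \<phi> I a" "symmetric G \<phi> I (b :: ('x, 'i) vtree)"
  shows "symmetric G \<phi> I (vupair a b)"
proof -
  obtain c d where "c \<in> I" "d \<in> I" and c: "\<forall>\<delta>\<in>pstab G \<phi> c. veq (vact \<phi> \<delta> a) a"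
    and d: "\<forall>\<delta>\<in>pstab G \<phi> d. veq (vact \<phi> \<delta> b) b"
    using assms(2,3) unfolding symmetric_iff by blast
  show ?thesis
  proof (rule symmetricI[OF ideal_Un[OF \<open>c \<in> I\<close> \<open>d \<in> I\<close>]])
    fix \<delta> assume "\<delta> \<in> pstab G \<phi> (c \<union> d)"
    then have "\<delta> \<in> pstab G \<phi> c" "\<delta> \<in> pstab G \<phi> d"
      using pstab_antimono[of c "c \<union> d" G \<phi>] pstab_antimono[of d "c \<union> d" G \<phi>] by blast+
    then show "veq (vact \<phi> \<delta> (vupair a b)) (vupair a b)"
      using c d by (simp add: vact_vupair vupair_cong[OF assms(1)])
  qed
qed

lemma hsymmetric_vpair:
  assumes inf: "infinite (UNIV :: 'i set)"
    and "hsymmetric G \<phi> I a" "hsymmetric G \<phi> I (b :: ('x, 'i) vtree)"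
  shows "hsymmetric G \<phi> I (vpair a b)"
proof -
  have ab: "symmetric G \<phi> I a" "symmetric G \<phi> I b"
    using assms(2,3) by (simp_all add: hsymmetric_def)
  then have "symmetric G \<phi> I (vupair a a)" "symmetric G \<phi> I (vupair a b)"
    by (simp_all add: symmetric_vupair[OF inf])
  then have "symmetric G \<phi> I (vpair a b)"
    unfolding vpair_def by (rule symmetric_vupair[OF inf])
  moreover have "symmetric G \<phi> I s" if "vsub s (vpair a b)" for s
    using vsub_vpair[OF inf that] ab \<open>symmetric G \<phi> I (vupair a a)\<close>
      \<open>symmetric G \<phi> I (vupair a b)\<close> assms(2,3) unfolding hsymmetric_def by blast
  ultimately show ?thesis unfolding hsymmetric_def by blast
qed

lemma symmetric_vact:
  assumes "\<gamma> \<in> carrier G" "atoms t \<subseteq> X" "symmetric G \<phi> I t"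
  shows "symmetric G \<phi> I (vact \<phi> \<gamma> t)"
proof -
  obtain b where "b \<in> I" "\<forall>\<delta>\<in>pstab G \<phi> b. veq (vact \<phi> \<delta> t) t"
    using assms(3) unfolding symmetric_iff by blast
  then show ?thesis
    using assms(1,2) ideal_subset[OF \<open>b \<in> I\<close>] pstab_image_fixes_vact
    by (intro symmetricI[OF ideal_image[OF assms(1)]]) blast+
qed

lemma hsymmetric_vact:
  assumes "\<gamma> \<in> carrier G" "atoms t \<subseteq> X" "hsymmetric G \<phi> I t"
  shows "hsymmetric G \<phi> I (vact \<phi> \<gamma> t)"
  unfolding hsymmetric_def
proof (intro conjI allI impI)
  show "symmetric G \<phi> I (vact \<phi> \<gamma> t)"
    using assms symmetric_vact hsymmetric_def by blast
  fix s assume "vsub s (vact \<phi> \<gamma> t)"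
  from vsub_vact[OF this] obtain s0 where "vsub s0 t" "s = vact \<phi> \<gamma> s0" by blast
  moreover from \<open>vsub s0 t\<close> have "atoms s0 \<subseteq> X" using assms(2) atoms_vsub by blast
  ultimately show "symmetric G \<phi> I s"
    using assms(1,3) symmetric_vact hsymmetric_def by blast
qed

end

section \<open>Sigma-completeness implies countable choice\<close>

locale countable_family = dynamical_ideal G X \<phi> I
  for G :: "('g, 'm) monoid_scheme" (structure) and X :: "'x set" and \<phi> and I +
  fixes F g w :: "('x, 'i) vtree" and \<nu> :: "nat \<Rightarrow> 'i" and f :: "'i \<Rightarrow> ('x, 'i) vtree option"
    and c :: "'x set"
  assumes infinite_index: "infinite (UNIV :: 'i set)" and inj_nu: "inj \<nu>"
    and sigma_complete: "sigma_complete G \<phi> I"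
    and F_inW: "inW G X \<phi> I F" and F_eq: "F = Node f"
    and F_nonempty: "\<forall>A. vmem A F \<longrightarrow> isSet A \<and> (\<exists>y. vmem y A)"
    and omega_w: "is_omega w" and fun_g: "is_fun g F"
    and range_g: "\<forall>p a n. vmem p g \<and> is_kpair p a n \<longrightarrow> vmem n w"
    and inj_g: "\<forall>p p' a a' n. vmem p g \<and> vmem p' g \<and> is_kpair p a n \<and> is_kpair p' a' n \<longrightarrow> veq a a'"
    and c_in_I: "c \<in> I" and c_supports_g: "\<forall>\<delta>\<in>pstab G \<phi> c. veq (vact \<phi> \<delta> g) g"
begin

definition indexed :: "('x, 'i) vtree \<Rightarrow> nat \<Rightarrow> bool" where
  "indexed A k \<longleftrightarrow> (\<exists>p m. vmem p g \<and> is_kpair p A m \<and> is_vnat k m)"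

definition index :: "('x, 'i) vtree \<Rightarrow> nat" where
  "index A = (SOME k. indexed A k)"

lemma indexed_index: "A \<in> children F \<Longrightarrow> indexed A (index A)"
  unfolding index_def
proof (rule someI_ex)
  assume "A \<in> children F"
  then obtain p m where "vmem p g" "is_kpair p A m"
    using fun_g vmem_child unfolding is_fun_def by blast
  moreover from this obtain k where "is_vnat k m"
    using range_g omega_w unfolding is_omega_def by blast
  ultimately show "\<exists>k. indexed A k" unfolding indexed_def by blast
qed

lemma indexed_veq:
  assumes "indexed A k" "veq A A'"
  shows "indexed A' k"
proof -
  obtain p m where "vmem p g" "is_kpair p A m" "is_vnat k m"
    using assms(1) unfolding indexed_def by blast
  then show ?thesis
    unfolding indexed_def using is_kpair_cong[OF infinite_index _ veq_refl assms(2) veq_refl] by blast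
qed

lemma index_veq:
  assumes "veq A A'"
  shows "index A = index A'"
proof -
  have "indexed A k \<longleftrightarrow> indexed A' k" for k
    using indexed_veq[of A k A'] indexed_veq[of A' k A] assms veq_sym by blast
  then show ?thesis by (simp add: index_def)
qed

lemma veq_if_indexed:
  assumes "indexed A k" "indexed B k"
  shows "veq A B"
proof -
  obtain p m where p: "vmem p g" "is_kpair p A m" "is_vnat k m"
    using assms(1) unfolding indexed_def by blast
  obtain p' m' where p': "vmem p' g" "is_kpair p' B m'" "is_vnat k m'"
    using assms(2) unfolding indexed_def by blast
  have "veq m' m" using is_vnat_iff[OF inj_nu] p(3) p'(3) veq_sym veq_trans by metis
  then have "is_kpair p' B m" using is_kpair_cong[OF infinite_index p'(2) veq_refl veq_refl] by blast
  then show ?thesis using inj_g p(1,2) p'(1) by blast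
qed

text \<open>A member of \<open>F\<close> is determined by its index.\<close>

lemma pstab_fixes_member:
  assumes "\<delta> \<in> pstab G \<phi> c" "A \<in> children F"
  shows "veq (vact \<phi> \<delta> A) A"
proof -
  obtain p m where pm: "vmem p g" "is_kpair p A m" "is_vnat (index A) m"
    using indexed_index[OF assms(2)] unfolding indexed_def by blast
  have "vmem (vact \<phi> \<delta> p) g"
    by (rule vmem_veq_right[OF bspec[OF c_supports_g assms(1)] vmem_vact[OF pm(1)]])
  moreover have "is_kpair (vact \<phi> \<delta> p) (vact \<phi> \<delta> A) m"
    by (rule is_kpair_cong[OF infinite_index is_kpair_vact[OF infinite_index pm(2)] veq_refl veq_refl
          veq_vact_if_is_vnat[OF inj_nu pm(3)]])
  ultimately have "indexed (vact \<phi> \<delta> A) (index A)"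
    unfolding indexed_def using pm(3) by (intro exI conjI)
  then show ?thesis by (rule veq_if_indexed[OF _ indexed_index[OF assms(2)]])
qed

definition occurs :: "nat \<Rightarrow> bool" where
  "occurs n \<longleftrightarrow> (\<exists>A\<in>children F. index A = n)"

definition member :: "nat \<Rightarrow> ('x, 'i) vtree" where
  "member n = (SOME A. A \<in> children F \<and> index A = n)"

definition elt :: "nat \<Rightarrow> ('x, 'i) vtree" where
  "elt n = (SOME y. y \<in> children (member n))"

definition support :: "nat \<Rightarrow> 'x set" where
  "support n = (if occurs n
     then SOME b. b \<in> I \<and> (\<forall>\<delta>\<in>pstab G \<phi> b. veq (vact \<phi> \<delta> (elt n)) (elt n)) else {})"

definition shift :: "nat \<Rightarrow> 'g" where
  "shift = (SOME \<gamma>. (\<forall>n. \<gamma> n \<in> pstab G \<phi> c) \<and> (\<Union>n. \<phi> (\<gamma> n) ` support n) \<in> I)"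

definition choice :: "nat \<Rightarrow> ('x, 'i) vtree" where
  "choice n = vact \<phi> (shift n) (elt n)"

definition chooser :: "('x, 'i) vtree" where
  "chooser = Node (\<lambda>i. map_option (\<lambda>A. vpair A (choice (index A))) (f i))"

lemma occurs_index: "A \<in> children F \<Longrightarrow> occurs (index A)"
  unfolding occurs_def by blast

lemma member_index: "occurs n \<Longrightarrow> member n \<in> children F \<and> index (member n) = n"
  unfolding member_def occurs_def by (rule someI_ex) blast

lemma veq_member_index: "A \<in> children F \<Longrightarrow> veq (member (index A)) A"
  using member_index[OF occurs_index] veq_if_indexed indexed_index by metis

lemma elt_child: "occurs n \<Longrightarrow> elt n \<in> children (member n)"
proof -
  assume "occurs n"
  then have "vmem (member n) F" using member_index vmem_child by blast
  then have "\<exists>y. y \<in> children (member n)" using F_nonempty unfolding vmem_def by blast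
  then show ?thesis unfolding elt_def by (rule someI_ex)
qed

lemma vsub_elt: "occurs n \<Longrightarrow> vsub (elt n) F"
  using vsub_trans[OF vsub_child[OF elt_child] vsub_child] member_index by blast

lemma elt_atoms: "occurs n \<Longrightarrow> atoms (elt n) \<subseteq> X"
  using F_inW atoms_vsub[OF vsub_elt] unfolding inW_iff by blast

lemma hsymmetric_elt: "occurs n \<Longrightarrow> hsymmetric G \<phi> I (elt n)"
  using F_inW hsymmetric_vsub[OF _ vsub_elt] unfolding inW_iff by blast

lemma support_spec:
  "occurs n \<Longrightarrow> support n \<in> I \<and> (\<forall>\<delta>\<in>pstab G \<phi> (support n). veq (vact \<phi> \<delta> (elt n)) (elt n))"
proof -
  assume "occurs n"
  then have "\<exists>b. b \<in> I \<and> (\<forall>\<delta>\<in>pstab G \<phi> b. veq (vact \<phi> \<delta> (elt n)) (elt n))"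
    using hsymmetric_elt unfolding hsymmetric_def symmetric_iff by blast
  then show ?thesis unfolding support_def using \<open>occurs n\<close> by (simp only: if_True) (rule someI_ex)
qed

lemma support_in_I: "support n \<in> I"
  using support_spec by (cases "occurs n") (simp_all add: support_def empty_in_ideal)

lemma shift_spec: "shift n \<in> pstab G \<phi> c" "(\<Union>n. \<phi> (shift n) ` support n) \<in> I"
proof -
  have "\<exists>\<gamma>. (\<forall>n. \<gamma> n \<in> pstab G \<phi> c) \<and> (\<Union>n. \<phi> (\<gamma> n) ` support n) \<in> I"
    using sigma_complete c_in_I support_in_I unfolding sigma_complete_def by blast
  then have "(\<forall>n. shift n \<in> pstab G \<phi> c) \<and> (\<Union>n. \<phi> (shift n) ` support n) \<in> I"
    unfolding shift_def by (rule someI_ex)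
  then show "shift n \<in> pstab G \<phi> c" "(\<Union>n. \<phi> (shift n) ` support n) \<in> I" by blast+
qed

lemma shift_carrier: "shift n \<in> carrier G"
  using shift_spec(1) by (rule pstab_carrier)

lemma children_chooser: "children chooser = (\<lambda>A. vpair A (choice (index A))) ` children F"
  unfolding chooser_def children_Node_map_option F_eq[symmetric] ..

lemma vmem_choice: "A \<in> children F \<Longrightarrow> vmem (choice (index A)) A"
proof -
  assume A: "A \<in> children F"
  define n where "n = index A"
  have n: "occurs n" unfolding n_def by (rule occurs_index[OF A])
  have "vmem (choice n) (vact \<phi> (shift n) (member n))"
    unfolding choice_def by (rule vmem_vact[OF vmem_child[OF elt_child[OF n]]])
  moreover have "veq (vact \<phi> (shift n) (member n)) (member n)"
    using pstab_fixes_member[OF shift_spec(1)] member_index[OF n] by blast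
  ultimately have "vmem (choice n) (member n)" by (rule vmem_veq_right[rotated])
  then show ?thesis
    using vmem_veq_right[OF veq_member_index[OF A]] unfolding n_def by blast
qed

lemma is_fun_chooser: "is_fun chooser F"
proof (rule is_fun_graph[OF infinite_index _ children_chooser])
  show "isSet chooser" by (simp add: chooser_def isSet_def)
  show "children F = (\<lambda>A. A) ` children F" by simp
  show "veq (choice (index A)) (choice (index A'))" if "veq A A'" for A A'
    using index_veq[OF that] by simp
qed

lemma chooser_chooses: "vmem p chooser \<and> is_kpair p A y \<longrightarrow> vmem y A"
proof
  assume "vmem p chooser \<and> is_kpair p A y"
  then obtain A0 where "A0 \<in> children F" "veq A A0" "veq y (choice (index A0))"
    using kpair_in_graphE[OF infinite_index children_chooser] by metis
  then show "vmem y A"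
    using vmem_choice vmem_veq_left vmem_veq_right veq_sym by metis
qed

definition chooser_support :: "'x set" where
  "chooser_support = c \<union> (\<Union>n. \<phi> (shift n) ` support n)"

lemma chooser_support_in_I: "chooser_support \<in> I"
  unfolding chooser_support_def by (rule ideal_Un[OF c_in_I shift_spec(2)])

lemma choice_fixed:
  assumes "\<delta> \<in> pstab G \<phi> chooser_support" "occurs n"
  shows "veq (vact \<phi> \<delta> (choice n)) (choice n)"
proof -
  have "\<delta> \<in> pstab G \<phi> (\<phi> (shift n) ` support n)"
    using assms(1) pstab_antimono[of "\<phi> (shift n) ` support n" chooser_support G \<phi>]
    unfolding chooser_support_def by blast
  then show ?thesis
    unfolding choice_def
    using pstab_image_fixes_vact[OF shift_carrier elt_atoms[OF assms(2)]
        ideal_subset[OF support_in_I]] support_spec[OF assms(2)] by blast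
qed

lemma symmetric_chooser: "symmetric G \<phi> I chooser"
proof (rule symmetricI[OF chooser_support_in_I])
  fix \<delta> assume \<delta>: "\<delta> \<in> pstab G \<phi> chooser_support"
  then have "\<delta> \<in> pstab G \<phi> c"
    using pstab_antimono[of c chooser_support G \<phi>] unfolding chooser_support_def by blast
  show "veq (vact \<phi> \<delta> chooser) chooser"
  proof (rule veq_vact_setI)
    show "isSet chooser" by (simp add: chooser_def isSet_def)
    fix u assume "u \<in> children chooser"
    then obtain A where "A \<in> children F" "u = vpair A (choice (index A))"
      unfolding children_chooser by blast
    then show "veq (vact \<phi> \<delta> u) u"
      using pstab_fixes_member[OF \<open>\<delta> \<in> pstab G \<phi> c\<close>] choice_fixed[OF \<delta> occurs_index]
      by (simp add: vact_vpair vpair_cong[OF infinite_index])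
  qed
qed

lemma chooser_inW: "inW G X \<phi> I chooser"
  unfolding inW_iff
proof
  have children: "atoms u \<subseteq> X" "hsymmetric G \<phi> I u" if "u \<in> children chooser" for u
  proof -
    obtain A where A: "A \<in> children F" and u: "u = vpair A (choice (index A))"
      using \<open>u \<in> children chooser\<close> unfolding children_chooser by blast
    have "atoms A \<subseteq> X" "hsymmetric G \<phi> I A"
      using F_inW A atoms_child hsymmetric_child unfolding inW_iff by blast+
    moreover have n: "occurs (index A)" by (rule occurs_index[OF A])
    have "atoms (choice (index A)) \<subseteq> X"
      unfolding choice_def atoms_vact by (rule image_subset_E[OF shift_carrier elt_atoms[OF n]])
    moreover have "hsymmetric G \<phi> I (choice (index A))"
      unfolding choice_def by (rule hsymmetric_vact[OF shift_carrier elt_atoms[OF n] hsymmetric_elt[OF n]])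
    ultimately show "atoms u \<subseteq> X" "hsymmetric G \<phi> I u"
      unfolding u by (simp_all add: atoms_vpair[OF infinite_index] hsymmetric_vpair[OF infinite_index])
  qed
  have "isSet chooser" by (simp add: chooser_def isSet_def)
  then have "atoms chooser = \<Union> (atoms ` children chooser)" by (rule atoms_set)
  with children(1) show "atoms chooser \<subseteq> X" by blast
  show "hsymmetric G \<phi> I chooser" using symmetric_chooser children(2) by (rule hsymmetricI)
qed

end

theorem countable_choice_if_sigma_complete:
  fixes G :: "('g, 'm) monoid_scheme" and X :: "'x set" and I :: "'x set set"
  assumes "dyn_ideal G X \<phi> I" "infinite (UNIV :: 'i set)" "sigma_complete G \<phi> I"
  shows "countable_choice_W TYPE('i) G X \<phi> I"
  unfolding countable_choice_W_def
proof (intro allI impI)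
  fix F :: "('x, 'i) vtree"
  assume F: "inW G X \<phi> I F \<and> isSet F \<and> countable_in_W G X \<phi> I F \<and>
    (\<forall>A. vmem A F \<longrightarrow> isSet A \<and> (\<exists>y. vmem y A))"
  obtain \<nu> :: "nat \<Rightarrow> 'i" where "inj \<nu>" using infinite_countable_subset[OF assms(2)] by blast
  obtain f where "F = Node f" using F unfolding isSet_def by blast
  obtain g w where g: "inW G X \<phi> I g" "is_omega w" "is_fun g F"
    "\<forall>p a n. vmem p g \<and> is_kpair p a n \<longrightarrow> vmem n w"
    "\<forall>p p' a a' n. vmem p g \<and> vmem p' g \<and> is_kpair p a n \<and> is_kpair p' a' n \<longrightarrow> veq a a'"
    using F unfolding countable_in_W_def by blast
  obtain c where "c \<in> I" "\<forall>\<delta>\<in>pstab G \<phi> c. veq (vact \<phi> \<delta> g) g"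
    using g(1) unfolding inW_iff hsymmetric_def symmetric_iff by blast
  then interpret countable_family G X \<phi> I F g w \<nu> f c
    using assms F g \<open>inj \<nu>\<close> \<open>F = Node f\<close> by unfold_locales auto
  show "\<exists>c. inW G X \<phi> I c \<and> is_fun c F \<and> (\<forall>p A y. vmem p c \<and> is_kpair p A y \<longrightarrow> vmem y A)"
    using chooser_inW is_fun_chooser chooser_chooses by blast
qed

section \<open>Countable choice implies sigma-completeness\<close>

lemma inj_functions_into_index:
  assumes "infinite (UNIV :: 'i set)" "inj (e :: 'x set set \<Rightarrow> 'i)"
  shows "\<exists>h :: ('x \<Rightarrow> 'x) \<Rightarrow> 'i. inj h"
proof -
  define graph :: "('x \<Rightarrow> 'x) \<Rightarrow> ('x \<times> 'x) set" where "graph f = range (\<lambda>x. (x, f x))" for f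
  have inj_graph: "inj graph"
    by (rule injI) (auto simp: graph_def fun_eq_iff)
  show ?thesis
  proof (cases "finite (UNIV :: 'x set)")
    case True
    then have "finite (UNIV :: ('x \<times> 'x) set set)"
      by (metis Pow_UNIV finite_Pow_iff finite_Prod_UNIV)
    then obtain q :: "('x \<times> 'x) set \<Rightarrow> nat" where "inj q"
      using finite_imp_inj_to_nat_seg by blast
    moreover obtain \<nu> :: "nat \<Rightarrow> 'i" where "inj \<nu>"
      using infinite_countable_subset[OF assms(1)] by blast
    ultimately have "inj (\<nu> \<circ> q \<circ> graph)" using inj_graph by (blast intro: inj_compose)
    then show ?thesis by blast
  next
    case False
    obtain p :: "'x \<times> 'x \<Rightarrow> 'x" where "bij_betw p (UNIV \<times> UNIV) UNIV"
      using card_of_ordIso[THEN iffD2, OF card_of_Times_same_infinite[OF False]] by blast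
    then have "inj p" unfolding bij_betw_def by simp
    have "inj (\<lambda>f. e {p ` graph f})"
      by (rule injI) (use assms(2) \<open>inj p\<close> inj_graph in \<open>auto simp: inj_eq inj_image_eq_iff\<close>)
    then show ?thesis by blast
  qed
qed

lemma vact_fixes_labelled_atoms:
  fixes lab :: "'a \<Rightarrow> ('x, 'i) vtree"
  assumes "infinite (UNIV :: 'i set)" "inj_on \<iota> B"
    and lab_inj: "\<And>x y. veq (lab x) (lab y) \<Longrightarrow> x = y" and lab_fixed: "\<And>x. vact \<phi> \<delta> (lab x) = lab x"
    and fixed: "veq (vact \<phi> \<delta> (vfamily \<iota> B (\<lambda>x. vpair (lab x) (Atom (h x)))))
      (vfamily \<iota> B (\<lambda>x. vpair (lab x) (Atom (h x))))" (is "veq (vact \<phi> \<delta> ?T) ?T")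
    and "z \<in> B"
  shows "\<phi> \<delta> (h z) = h z"
proof -
  have "vpair (lab z) (Atom (\<phi> \<delta> (h z))) = vact \<phi> \<delta> (vpair (lab z) (Atom (h z)))"
    by (simp add: vact_vpair lab_fixed)
  also have "\<dots> \<in> children (vact \<phi> \<delta> ?T)"
    using \<open>z \<in> B\<close> by (simp add: children_vact children_vfamily[OF assms(2)])
  finally have "vmem (vpair (lab z) (Atom (\<phi> \<delta> (h z)))) ?T"
    using vmem_veq_right[OF fixed vmem_child] by blast
  then obtain z' where z': "veq (vpair (lab z) (Atom (\<phi> \<delta> (h z)))) (vpair (lab z') (Atom (h z')))"
    unfolding vmem_def children_vfamily[OF assms(2)] by blast
  then show ?thesis using veq_vpairD[OF assms(1) z'] lab_inj by auto
qed

locale translates_family = dynamical_ideal G X \<phi> I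
  for G :: "('g, 'm) monoid_scheme" (structure) and X :: "'x set" and \<phi> and I +
  fixes a :: "'x set" and b :: "nat \<Rightarrow> 'x set" and \<nu> :: "nat \<Rightarrow> 'i" and \<iota> :: "'x \<Rightarrow> 'i"
    and h :: "('x \<Rightarrow> 'x) \<Rightarrow> 'i" and R :: "('x \<times> 'x) set"
  assumes infinite_index: "infinite (UNIV :: 'i set)" and inj_nu: "inj \<nu>"
    and inj_iota: "inj \<iota>" and inj_h: "inj h"
    and wf_R: "wf R" and total_R: "\<And>x y. x \<noteq> y \<Longrightarrow> (x, y) \<in> R \<or> (y, x) \<in> R"
    and a_in_I: "a \<in> I" and b_in_I: "\<And>n. b n \<in> I"
begin

definition label :: "'x \<Rightarrow> ('x, 'i) vtree" where
  "label = vcollapse R \<iota>"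

definition tagged :: "nat \<Rightarrow> ('x, 'i) vtree" where
  "tagged n = vfamily \<iota> (b n) (\<lambda>x. vpair (label x) (Atom x))"

text \<open>The translates of \<open>tagged n\<close> are indexed by the permutations \<open>\<phi> \<gamma>\<close> of the atoms,
  since the group itself need not inject into the index type.\<close>

definition translates :: "nat \<Rightarrow> ('x, 'i) vtree" where
  "translates n = vfamily h (\<phi> ` pstab G \<phi> a) (\<lambda>\<pi>. vact (\<lambda>\<pi>. \<pi>) \<pi> (tagged n))"

definition family :: "('x, 'i) vtree" where
  "family = vfamily \<nu> UNIV translates"

lemma vact_label: "vact \<psi> \<delta> (label x) = label x"
  unfolding label_def by (rule vact_vcollapse[OF wf_R inj_iota])

lemma label_inj: "veq (label x) (label y) \<Longrightarrow> x = y"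
  unfolding label_def using vcollapse_veq_imp_eq[OF wf_R inj_iota total_R] by blast

lemma vact_tagged: "vact \<psi> \<delta> (tagged n) = vfamily \<iota> (b n) (\<lambda>x. vpair (label x) (Atom (\<psi> \<delta> x)))"
  unfolding tagged_def vact_vfamily vact_vpair vact_label by simp

lemma atoms_tagged: "atoms (tagged n) = b n"
proof -
  have "atoms (tagged n) = \<Union> (atoms ` children (tagged n))"
    unfolding tagged_def by (rule atoms_set) simp
  also have "children (tagged n) = (\<lambda>x. vpair (label x) (Atom x)) ` b n"
    unfolding tagged_def by (rule children_vfamily[OF inj_on_subset[OF inj_iota subset_UNIV]])
  finally show ?thesis
    by (simp add: atoms_vpair[OF infinite_index] label_def atoms_vcollapse[OF wf_R inj_iota])
qed

lemma atoms_tagged_subset: "atoms (tagged n) \<subseteq> X"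
  unfolding atoms_tagged by (rule ideal_subset[OF b_in_I])

lemma children_translates: "children (translates n) = (\<lambda>\<gamma>. vact \<phi> \<gamma> (tagged n)) ` pstab G \<phi> a"
proof -
  have "children (translates n) = (\<lambda>\<pi>. vact (\<lambda>\<pi>. \<pi>) \<pi> (tagged n)) ` \<phi> ` pstab G \<phi> a"
    unfolding translates_def by (rule children_vfamily[OF inj_on_subset[OF inj_h]]) simp
  also have "\<dots> = (\<lambda>\<gamma>. vact \<phi> \<gamma> (tagged n)) ` pstab G \<phi> a"
    unfolding image_image by (intro image_cong refl vact_cong)
  finally show ?thesis .
qed

lemma translates_fixed:
  assumes "\<delta> \<in> pstab G \<phi> a"
  shows "veq (vact \<phi> \<delta> (translates n)) (translates n)"
proof (rule veq_setI)
  have "children (vact \<phi> \<delta> (translates n)) =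
      (\<lambda>\<gamma>. vact \<phi> \<gamma> (tagged n)) ` (\<lambda>\<gamma>. \<delta> \<otimes> \<gamma>) ` pstab G \<phi> a"
    unfolding children_vact children_translates image_image
    using assms atoms_tagged_subset by (intro image_cong refl vact_mult) (auto dest: pstab_carrier)
  also have "\<dots> = children (translates n)"
    unfolding lmult_pstab_image[OF ideal_subset[OF a_in_I] assms] children_translates ..
  finally have "children (vact \<phi> \<delta> (translates n)) = children (translates n)" .
  then show "\<forall>u\<in>children (vact \<phi> \<delta> (translates n)). \<exists>v\<in>children (translates n). veq u v"
    "\<forall>v\<in>children (translates n). \<exists>u\<in>children (vact \<phi> \<delta> (translates n)). veq u v"
    by auto
qed (simp_all add: translates_def)

lemma translates_inW: "inW G X \<phi> I (translates n)"
proof -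
  have children: "atoms u \<subseteq> X \<and> hsymmetric G \<phi> I u" if "u \<in> children (translates n)" for u
  proof -
    obtain \<gamma> where \<gamma>: "\<gamma> \<in> pstab G \<phi> a" and u: "u = vact \<phi> \<gamma> (tagged n)"
      using \<open>u \<in> children (translates n)\<close> unfolding children_translates by blast
    then have "atoms u = \<phi> \<gamma> ` b n" "\<phi> \<gamma> ` b n \<in> I"
      using ideal_image[OF pstab_carrier[OF \<gamma>] b_in_I] by (simp_all add: atoms_vact atoms_tagged)
    then show ?thesis
      using image_subset_E[OF pstab_carrier[OF \<gamma>] ideal_subset[OF b_in_I]]
        hsymmetric_if_atoms_subset[of "\<phi> \<gamma> ` b n" I u G \<phi>] by simp
  qed
  have "symmetric G \<phi> I (translates n)"
    using symmetricI[OF a_in_I translates_fixed] .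
  then have "hsymmetric G \<phi> I (translates n)"
    by (rule hsymmetricI) (use children in blast)
  moreover have "atoms (translates n) = \<Union> (atoms ` children (translates n))"
    unfolding translates_def by (rule atoms_set) simp
  ultimately show ?thesis unfolding inW_iff using children by auto
qed

lemma children_family: "children family = range translates"
  unfolding family_def by (rule children_vfamily[OF inj_nu])

lemma family_inW: "inW G X \<phi> I family"
proof -
  have "symmetric G \<phi> I family"
  proof (rule symmetricI[OF a_in_I])
    fix \<delta> assume \<delta>: "\<delta> \<in> pstab G \<phi> a"
    show "veq (vact \<phi> \<delta> family) family"
    proof (rule veq_vact_setI)
      show "isSet family" by (simp add: family_def)
      fix u assume "u \<in> children family"
      then obtain n where "u = translates n" unfolding children_family by blast
      then show "veq (vact \<phi> \<delta> u) u" using translates_fixed[OF \<delta>] by simp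
    qed
  qed
  moreover have "atoms family = \<Union> (atoms ` children family)"
    unfolding family_def by (rule atoms_set) simp
  ultimately show ?thesis
    unfolding inW_iff children_family using translates_inW[unfolded inW_iff] hsymmetricI[of G \<phi> I family]
    by (auto simp: children_family)
qed

lemma family_members_nonempty: "vmem A family \<Longrightarrow> isSet A \<and> (\<exists>y. vmem y A)"
proof -
  assume "vmem A family"
  then obtain n where "veq (translates n) A"
    unfolding vmem_def children_family by (auto intro: veq_sym)
  moreover have "vmem (vact \<phi> \<one> (tagged n)) (translates n)"
    using subgroup.one_closed[OF subgroup_pstab[OF ideal_subset[OF a_in_I]]]
    by (intro vmem_child) (auto simp: children_translates)
  ultimately show ?thesis
    using veq_isSet vmem_veq_right by (metis translates_def isSet_vfamily)
qed

definition first_index :: "nat \<Rightarrow> nat" where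
  "first_index k = (LEAST j. veq (translates j) (translates k))"

definition enumeration :: "('x, 'i) vtree" where
  "enumeration = vfamily \<nu> UNIV (\<lambda>k. vpair (translates k) (vnum \<nu> (first_index k)))"

lemma veq_translates_first_index: "veq (translates (first_index k)) (translates k)"
  unfolding first_index_def by (rule LeastI[of _ k]) (rule veq_refl)

lemma first_index_veq:
  assumes "veq (translates k) (translates k')"
  shows "first_index k = first_index k'"
proof -
  have "veq (translates j) (translates k) \<longleftrightarrow> veq (translates j) (translates k')" for j
    using assms veq_sym veq_trans by blast
  then show ?thesis unfolding first_index_def by simp
qed

lemma children_enumeration:
  "children enumeration = (\<lambda>k. vpair (translates k) (vnum \<nu> (first_index k))) ` UNIV"
  unfolding enumeration_def by (rule children_vfamily[OF inj_nu])

lemma is_fun_enumeration: "is_fun enumeration family"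
  by (rule is_fun_graph[OF infinite_index _ children_enumeration children_family])
    (auto simp: enumeration_def first_index_veq)

lemma enumeration_inW: "inW G X \<phi> I enumeration"
proof -
  have "symmetric G \<phi> I enumeration"
  proof (rule symmetricI[OF a_in_I])
    fix \<delta> assume \<delta>: "\<delta> \<in> pstab G \<phi> a"
    show "veq (vact \<phi> \<delta> enumeration) enumeration"
    proof (rule veq_vact_setI)
      show "isSet enumeration" by (simp add: enumeration_def)
      fix u assume "u \<in> children enumeration"
      then obtain k where "u = vpair (translates k) (vnum \<nu> (first_index k))"
        unfolding children_enumeration by blast
      then show "veq (vact \<phi> \<delta> u) u"
        using translates_fixed[OF \<delta>]
        by (simp add: vact_vpair vact_vnum[OF inj_nu] vpair_cong[OF infinite_index])
    qed
  qed
  moreover have "atoms u \<subseteq> X \<and> hsymmetric G \<phi> I u" if "u \<in> children enumeration" for u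
  proof -
    obtain k where u: "u = vpair (translates k) (vnum \<nu> (first_index k))"
      using \<open>u \<in> children enumeration\<close> unfolding children_enumeration by blast
    have "hsymmetric G \<phi> I (vnum \<nu> (first_index k) :: ('x, 'i) vtree)"
      by (rule hsymmetric_if_atoms_subset[OF empty_in_ideal]) (simp add: atoms_vnum[OF inj_nu])
    then show ?thesis
      unfolding u using translates_inW[of k, unfolded inW_iff]
      by (simp add: atoms_vpair[OF infinite_index] atoms_vnum[OF inj_nu] hsymmetric_vpair[OF infinite_index])
  qed
  moreover have "atoms enumeration = \<Union> (atoms ` children enumeration)"
    unfolding enumeration_def by (rule atoms_set) simp
  ultimately show ?thesis unfolding inW_iff using hsymmetricI[of G \<phi> I enumeration] by blast
qed

lemma family_countable: "countable_in_W G X \<phi> I family"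
  unfolding countable_in_W_def
proof (intro exI conjI allI impI)
  show "inW G X \<phi> I enumeration" by (rule enumeration_inW)
  show "is_omega (vomega \<nu> :: ('x, 'i) vtree)" by (rule is_omega_vomega[OF inj_nu])
  show "is_fun enumeration family" by (rule is_fun_enumeration)
next
  fix p x n assume "vmem p enumeration \<and> is_kpair p x n"
  then obtain k where "veq n (vnum \<nu> (first_index k))"
    using kpair_in_graphE[OF infinite_index children_enumeration] by metis
  then show "vmem n (vomega \<nu>)" unfolding vmem_vomega[OF inj_nu] by blast
next
  fix p p' x x' n
  assume "vmem p enumeration \<and> vmem p' enumeration \<and> is_kpair p x n \<and> is_kpair p' x' n"
  then obtain k k' where "veq x (translates k)" "veq n (vnum \<nu> (first_index k))"
    "veq x' (translates k')" "veq n (vnum \<nu> (first_index k'))"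
    using kpair_in_graphE[OF infinite_index children_enumeration] by metis
  moreover from calculation have "first_index k = first_index k'"
    using veq_vnum_imp_eq[OF inj_nu] veq_sym veq_trans by metis
  ultimately show "veq x x'"
    using veq_translates_first_index veq_sym veq_trans by metis
qed

lemma chosen_translates:
  assumes "is_fun c family" "\<forall>p A y. vmem p c \<and> is_kpair p A y \<longrightarrow> vmem y A"
  obtains \<gamma> where "\<And>n. \<gamma> n \<in> pstab G \<phi> a"
    "\<And>n. \<exists>p y. vmem p c \<and> is_kpair p (translates n) y \<and> veq y (vact \<phi> (\<gamma> n) (tagged n))"
proof -
  have "\<exists>\<gamma> \<in> pstab G \<phi> a. \<exists>p y. vmem p c \<and> is_kpair p (translates n) y \<and> veq y (vact \<phi> \<gamma> (tagged n))"
    for n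
  proof -
    have "vmem (translates n) family" unfolding vmem_def children_family by blast
    then obtain p y where "vmem p c" "is_kpair p (translates n) y"
      using assms(1) unfolding is_fun_def by blast
    moreover from this have "vmem y (translates n)" using assms(2) by blast
    then obtain \<gamma> where "\<gamma> \<in> pstab G \<phi> a" "veq y (vact \<phi> \<gamma> (tagged n))"
      unfolding vmem_def children_translates by blast
    ultimately show ?thesis by blast
  qed
  then show thesis using that by metis
qed

lemma fixes_chosen_translate:
  assumes c_fixed: "\<forall>\<delta>\<in>pstab G \<phi> d. veq (vact \<phi> \<delta> c) c" and fun_c: "is_fun c family"
    and \<delta>: "\<delta> \<in> pstab G \<phi> (a \<union> d)"
    and p: "vmem p c" "is_kpair p (translates n) y" and y: "veq y (vact \<phi> \<gamma> (tagged n))"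
    and "z \<in> b n"
  shows "\<phi> \<delta> (\<phi> \<gamma> z) = \<phi> \<gamma> z"
proof -
  have \<delta>a: "\<delta> \<in> pstab G \<phi> a" and \<delta>d: "\<delta> \<in> pstab G \<phi> d"
    using \<delta> pstab_antimono[of a "a \<union> d" G \<phi>] pstab_antimono[of d "a \<union> d" G \<phi>] by blast+
  have "vmem (vact \<phi> \<delta> p) c"
    by (rule vmem_veq_right[OF bspec[OF c_fixed \<delta>d] vmem_vact[OF p(1)]])
  moreover have "is_kpair (vact \<phi> \<delta> p) (translates n) (vact \<phi> \<delta> y)"
    by (rule is_kpair_cong[OF infinite_index is_kpair_vact[OF infinite_index p(2)] veq_refl
          translates_fixed[OF \<delta>a] veq_refl])
  ultimately have "veq y (vact \<phi> \<delta> y)"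
    using fun_c p unfolding is_fun_def by blast
  then have "veq (vact \<phi> \<delta> (vact \<phi> \<gamma> (tagged n))) (vact \<phi> \<gamma> (tagged n))"
    using veq_vact[OF y, of \<phi> \<delta>] y veq_sym veq_trans by metis
  then show ?thesis
    unfolding vact_tagged
    by (rule vact_fixes_labelled_atoms[where lab = label and h = "\<phi> \<gamma>", rotated 4])
      (use infinite_index inj_iota label_inj vact_label \<open>z \<in> b n\<close> in \<open>auto intro: inj_on_subset\<close>)
qed

lemma chosen_translate_subset:
  assumes c_fixed: "\<forall>\<delta>\<in>pstab G \<phi> d. veq (vact \<phi> \<delta> c) c" and fun_c: "is_fun c family"
    and "a \<union> d \<subseteq> e" and e: "definably_closed_set G X \<phi> e"
    and p: "vmem p c" "is_kpair p (translates n) y" and y: "veq y (vact \<phi> \<gamma> (tagged n))"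
    and \<gamma>: "\<gamma> \<in> pstab G \<phi> a"
  shows "\<phi> \<gamma> ` b n \<subseteq> e"
proof
  fix x assume x: "x \<in> \<phi> \<gamma> ` b n"
  then obtain z where "z \<in> b n" "x = \<phi> \<gamma> z" by blast
  moreover have "\<phi> \<delta> (\<phi> \<gamma> z) = \<phi> \<gamma> z" if "\<delta> \<in> pstab G \<phi> e" for \<delta>
    using that pstab_antimono[OF \<open>a \<union> d \<subseteq> e\<close>, of G \<phi>]
      fixes_chosen_translate[OF c_fixed fun_c _ p y \<open>z \<in> b n\<close>] by blast
  moreover have "x \<in> X"
    using x image_subset_E[OF pstab_carrier[OF \<gamma>] ideal_subset[OF b_in_I]] by blast
  ultimately show "x \<in> e" using e unfolding definably_closed_set_def by blast
qed

lemma translates_bounded_if_choice: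
  assumes "definably_closed G X \<phi> I" "countable_choice_W TYPE('i) G X \<phi> I"
  shows "\<exists>\<gamma>. (\<forall>n. \<gamma> n \<in> pstab G \<phi> a) \<and> (\<Union>n. \<phi> (\<gamma> n) ` b n) \<in> I"
proof -
  obtain c where "inW G X \<phi> I c" and fun_c: "is_fun c family"
    and chooses: "\<forall>p A y. vmem p c \<and> is_kpair p A y \<longrightarrow> vmem y A"
    using assms(2) family_inW family_countable family_members_nonempty
    unfolding countable_choice_W_def by (metis family_def isSet_vfamily)
  then obtain d where "d \<in> I" and c_fixed: "\<forall>\<delta>\<in>pstab G \<phi> d. veq (vact \<phi> \<delta> c) c"
    unfolding inW_iff hsymmetric_def symmetric_iff by blast
  then obtain e where "e \<in> I" "a \<union> d \<subseteq> e" "definably_closed_set G X \<phi> e"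
    using assms(1) ideal_Un[OF a_in_I] unfolding definably_closed_def by blast
  obtain \<gamma> where \<gamma>: "\<And>n. \<gamma> n \<in> pstab G \<phi> a"
    and chosen: "\<And>n. \<exists>p y. vmem p c \<and> is_kpair p (translates n) y \<and> veq y (vact \<phi> (\<gamma> n) (tagged n))"
    using chosen_translates[OF fun_c chooses] by blast
  have "\<phi> (\<gamma> n) ` b n \<subseteq> e" for n
    using chosen[of n] chosen_translate_subset[OF c_fixed fun_c \<open>a \<union> d \<subseteq> e\<close>
        \<open>definably_closed_set G X \<phi> e\<close> _ _ _ \<gamma>] by blast
  then have "(\<Union>n. \<phi> (\<gamma> n) ` b n) \<in> I"
    using ideal_downward_closed[OF \<open>e \<in> I\<close>, of "\<Union>n. \<phi> (\<gamma> n) ` b n"] by blast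
  then show ?thesis using \<gamma> by blast
qed

end

theorem sigma_complete_if_countable_choice:
  fixes G :: "('g, 'm) monoid_scheme" and X :: "'x set" and I :: "'x set set"
  assumes "dyn_ideal G X \<phi> I" "infinite (UNIV :: 'i set)" "inj (e :: 'x set set \<Rightarrow> 'i)"
    and "definably_closed G X \<phi> I" "countable_choice_W TYPE('i) G X \<phi> I"
  shows "sigma_complete G \<phi> I"
  unfolding sigma_complete_def
proof (intro ballI allI impI)
  fix a and b :: "nat \<Rightarrow> 'x set" assume "a \<in> I" "\<forall>n. b n \<in> I"
  obtain \<nu> :: "nat \<Rightarrow> 'i" where "inj \<nu>" using infinite_countable_subset[OF assms(2)] by blast
  have "inj (\<lambda>x. e {{x}})" using assms(3) by (auto intro!: injI dest: injD)
  obtain h :: "('x \<Rightarrow> 'x) \<Rightarrow> 'i" where "inj h" using inj_functions_into_index[OF assms(2,3)] by blast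
  obtain r :: "'x rel" where "well_order_on UNIV r" using well_order_on by blast
  then have "wf (r - Id)" "\<And>x y. x \<noteq> y \<Longrightarrow> (x, y) \<in> r - Id \<or> (y, x) \<in> r - Id"
    unfolding well_order_on_def linear_order_on_def total_on_def by blast+
  then interpret translates_family G X \<phi> I a b \<nu> "\<lambda>x. e {{x}}" h "r - Id"
    using assms \<open>a \<in> I\<close> \<open>\<forall>n. b n \<in> I\<close> \<open>inj \<nu>\<close> \<open>inj (\<lambda>x. e {{x}})\<close> \<open>inj h\<close>
    by unfold_locales auto
  show "\<exists>\<gamma>. (\<forall>n. \<gamma> n \<in> pstab G \<phi> a) \<and> (\<Union>n. \<phi> (\<gamma> n) ` b n) \<in> I"
    using translates_bounded_if_choice assms(4,5) by blast
qed

theorem mainTheorem10: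
  fixes G :: "('g, 'm) monoid_scheme" and X :: "'x set" and \<phi> :: "'g \<Rightarrow> 'x \<Rightarrow> 'x"
    and I :: "'x set set"
  assumes "dyn_ideal G X \<phi> I"
    and "infinite (UNIV :: 'i set)"
    and "\<exists>e :: 'x set set \<Rightarrow> 'i. inj e"
  shows "(sigma_complete G \<phi> I \<longrightarrow> countable_choice_W TYPE('i) G X \<phi> I)
       \<and> (definably_closed G X \<phi> I \<and> countable_choice_W TYPE('i) G X \<phi> I
            \<longrightarrow> sigma_complete G \<phi> I)"
  using countable_choice_if_sigma_complete[OF assms(1,2)]
    sigma_complete_if_countable_choice[OF assms(1,2)] assms(3) by blast

end
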